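(* Let $\Sigma$ be an alphabet with at least two letters and $f\colon\Sigma^*\to\Sigma^*$ RCP. If there exists $u\in\Sigma^*$ with $u\neq\varepsilon$ and $f(u)=\varepsilon$, then $f(x)=\varepsilon$ for all $x\in\Sigma^*$.
   Context: $\Sigma^*$ is the free monoid over $\Sigma$ (finite words, concatenation, empty word $\varepsilon$). A function $f\colon(\Sigma^* )^k\to\Sigma^*$ is RCP if for every monoid morphism $\varphi\colon\Sigma^*\to\Sigma^*$ and all $u_1,\ldots,u_k,v_1,\ldots,v_k$ with $\varphi(u_i)=\varphi(v_i)$ for all $i$, we have $\varphi(f(u_1,\ldots,u_k))=\varphi(f(v_1,\ldots,v_k))$. *)

theory Defs
  imports Main
begin

text \<open>Words over an alphabet S are lists with entries in S (the free monoid S*, with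
concatenation and the empty list as empty word).\<close>

definition monoid_morphism :: "'a set \<Rightarrow> ('a list \<Rightarrow> 'a list) \<Rightarrow> bool" where
  "monoid_morphism S \<phi> \<longleftrightarrow>
     (\<forall>u \<in> lists S. \<phi> u \<in> lists S) \<and>
     \<phi> [] = [] \<and>
     (\<forall>u \<in> lists S. \<forall>v \<in> lists S. \<phi> (u @ v) = \<phi> u @ \<phi> v)"

text \<open>RCP for a unary function f : S* \<rightarrow> S* (case k = 1).\<close>

definition RCP1 :: "'a set \<Rightarrow> ('a list \<Rightarrow> 'a list) \<Rightarrow> bool" where
  "RCP1 S f \<longleftrightarrow>
     (\<forall>\<phi>. monoid_morphism S \<phi> \<longrightarrow>
        (\<forall>u \<in> lists S. \<forall>v \<in> lists S. \<phi> u = \<phi> v \<longrightarrow> \<phi> (f u) = \<phi> (f v)))"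

end

theory Submission
  imports Defs
begin

text \<open>Collapsing every letter to a fixed letter shows that
the length of f x depends only on the length of x, so f vanishes on all words of the
length of u. The morphism a \<mapsto> a^L, b \<mapsto> a^n identifies a^n with b^L and is
non-erasing, so f vanishes on words of every positive length. Finally, erasing a letter
identifies [] with a one-letter word, so f [] can contain no letter other than a, and
symmetrically none other than b.\<close>

lemma monoid_morphism_concat_map:
  assumes "\<And>c. c \<in> S \<Longrightarrow> set (g c) \<subseteq> S"
  shows "monoid_morphism S (\<lambda>w. concat (map g w))"
  using assms unfolding monoid_morphism_def by (auto simp: lists_eq_set)

lemma monoid_morphism_filter: "monoid_morphism S (filter P)"
  unfolding monoid_morphism_def by (auto simp: lists_eq_set)

lemma RCP1D:
  "RCP1 S f \<Longrightarrow> monoid_morphism S \<phi> \<Longrightarrow> u \<in> lists S \<Longrightarrow> v \<in> lists S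
    \<Longrightarrow> \<phi> u = \<phi> v \<Longrightarrow> \<phi> (f u) = \<phi> (f v)"
  unfolding RCP1_def by blast

lemma concat_replicate_replicate: "concat (replicate m (replicate k x)) = replicate (m * k) x"
  by (induction m) (auto simp: replicate_add)

lemma RCP1_length_eq:
  assumes "RCP1 S f" "S \<noteq> {}" "x \<in> lists S" "y \<in> lists S" "length x = length y"
  shows "length (f x) = length (f y)"
proof -
  obtain a where "a \<in> S" using assms(2) by blast
  then have "monoid_morphism S (\<lambda>w. concat (map (\<lambda>_. [a]) w))"
    by (intro monoid_morphism_concat_map) auto
  moreover have "concat (map (\<lambda>_. [a]) x) = concat (map (\<lambda>_. [a]) y)"
    using assms(5) by (simp add: map_replicate_const)
  ultimately have "concat (map (\<lambda>_. [a]) (f x)) = concat (map (\<lambda>_. [a]) (f y))"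
    using RCP1D assms(1,3,4) by blast
  then show ?thesis
    by (simp add: map_replicate_const)
qed

lemma RCP1_replicate_Nil_transfer:
  assumes "RCP1 S f" "a \<in> S" "b \<in> S" "a \<noteq> b" "n \<ge> 1" "L \<ge> 1"
    and "f (replicate n a) = []"
  shows "f (replicate L b) = []"
proof -
  define g where "g c = (if c = a then replicate L a else if c = b then replicate n a else [a])" for c
  have morphism: "monoid_morphism S (\<lambda>w. concat (map g w))"
    using assms(2) by (intro monoid_morphism_concat_map) (auto simp: g_def)
  have non_erasing: "g c \<noteq> []" for c
    using assms(5,6) by (auto simp: g_def)
  have "concat (map g (replicate n a)) = replicate (n * L) a"
    by (simp add: g_def concat_replicate_replicate)
  moreover have "concat (map g (replicate L b)) = replicate (L * n) a"
    using assms(4) by (simp add: g_def concat_replicate_replicate)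
  ultimately have "concat (map g (replicate n a)) = concat (map g (replicate L b))"
    by (simp add: mult.commute)
  then have "concat (map g (f (replicate n a))) = concat (map g (f (replicate L b)))"
    by (rule RCP1D[OF assms(1) morphism, rotated 2]) (use assms(2,3) in auto)
  then show ?thesis
    using assms(7) non_erasing by (simp add: concat_eq_Nil_conv)
qed

lemma RCP1_filter_Nil_eq:
  assumes "RCP1 S f" "a \<in> S"
  shows "filter (\<lambda>c. c \<noteq> a) (f []) = filter (\<lambda>c. c \<noteq> a) (f [a])"
  using RCP1D[OF assms(1) monoid_morphism_filter] assms(2) by simp

theorem mainTheorem7:
  fixes S :: "'a set" and f :: "'a list \<Rightarrow> 'a list"
  assumes "finite S" and "card S \<ge> 2"
    and "\<forall>x \<in> lists S. f x \<in> lists S"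
    and "RCP1 S f"
    and "u \<in> lists S" and "u \<noteq> []" and "f u = []"
  shows "\<forall>x \<in> lists S. f x = []"
proof -
  obtain a b where ab: "a \<in> S" "b \<in> S" "a \<noteq> b"
    using assms(1,2) card_le_Suc0_iff_eq[OF assms(1)] by fastforce
  have "length (f (replicate (length u) a)) = length (f u)"
    by (rule RCP1_length_eq[OF assms(4)]) (use ab(1) assms(5) in auto)
  then have "f (replicate (length u) a) = []"
    using assms(7) by simp
  have nonempty: "f x = []" if "x \<in> lists S" "x \<noteq> []" for x
  proof -
    have "f (replicate (length x) b) = []"
      by (rule RCP1_replicate_Nil_transfer[OF assms(4) ab _ _ \<open>f (replicate (length u) a) = []\<close>])
        (use assms(6) that(2) in \<open>simp_all add: Suc_le_eq\<close>)
    moreover have "length (f x) = length (f (replicate (length x) b))"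
      by (rule RCP1_length_eq[OF assms(4) _ that(1)]) (use ab(2) in auto)
    ultimately show ?thesis
      by simp
  qed
  have "f [] = []"
  proof -
    have "f [a] = []" "f [b] = []"
      using nonempty ab(1,2) by auto
    then have "\<forall>c \<in> set (f []). c = a" "\<forall>c \<in> set (f []). c = b"
      using RCP1_filter_Nil_eq[OF assms(4) ab(1)] RCP1_filter_Nil_eq[OF assms(4) ab(2)]
      by (simp_all add: filter_empty_conv)
    then show ?thesis
      using ab(3) by (cases "f []") auto
  qed
  then show ?thesis
    using nonempty by blast
qed

end
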